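(* Assume (A1), (A2), (A3). For all $x,\tilde x,v,\tilde v\in\mathbb R^d$, \[r(x,\tilde x,v,\tilde v)^2\le2\,\frac{(1+\alpha)^2+\alpha^2}{\min(\frac13\lambda,3)}\big(H(x,v)+H(\tilde x,\tilde v)\big),\] so that in particular, if $r(x,\tilde x,v,\tilde v)\ge R_1$ then $\gamma H(x,v)+\gamma H(\tilde x,\tilde v)\ge\frac{12}5B$.
   Context: $U,W\in\mathcal C^1(\mathbb R^d)$. (A1): $U\ge0$ and there exist $\lambda>0$, $A\ge0$ with $\tfrac12\nabla U(x)\cdot x\ge\lambda(U(x)+|x|^2/4)-A$ for all $x$. (A2): $\nabla U$ is $L_U$-Lipschitz, $L_U>0$. (A3): $W$ even, $\nabla W$ is $L_W$-Lipschitz, $L_W<\lambda/8$. Fix $\tilde A\ge0$ with $U(x)\ge\frac\lambda6|x|^2-\tilde A$ for all $x$. Set $\gamma=\frac{\lambda}{2(\lambda+1)}$, $B=24(A+(\lambda-\gamma)\tilde A+d)$, $H(x,v)=24U(x)+(6(1-\gamma)+\lambda)|x|^2+12x\cdot v+12|v|^2$, $\alpha=L_U+\frac\lambda4$, $R_1=\sqrt{\frac{24((1+\alpha)^2+\alpha^2)}{5\gamma\min(3,\lambda/3)}B}$, and $r(x,\tilde x,v,\tilde v)=\alpha|x-\tilde x|+|x-\tilde x+v-\tilde v|$. *)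

theory Defs
  imports "HOL-Analysis.Analysis"
begin

text \<open>Constants of the paper. \<open>lam\<close> is lambda, \<open>LU\<close> is L_U, \<open>AA\<close> is A,
  \<open>At\<close> is A-tilde; the dimension d is DIM('a).\<close>

definition gam :: "real \<Rightarrow> real" where
  "gam lam = lam / (2 * (lam + 1))"

definition Bc :: "real \<Rightarrow> real \<Rightarrow> real \<Rightarrow> nat \<Rightarrow> real" where
  "Bc lam AA At d = 24 * (AA + (lam - gam lam) * At + real d)"

definition Hf :: "('a::euclidean_space \<Rightarrow> real) \<Rightarrow> real \<Rightarrow> 'a \<Rightarrow> 'a \<Rightarrow> real" where
  "Hf U lam x v = 24 * U x + (6 * (1 - gam lam) + lam) * (norm x)\<^sup>2 + 12 * (x \<bullet> v) + 12 * (norm v)\<^sup>2"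

definition alph :: "real \<Rightarrow> real \<Rightarrow> real" where
  "alph LU lam = LU + lam / 4"

definition R1 :: "real \<Rightarrow> real \<Rightarrow> real \<Rightarrow> real \<Rightarrow> nat \<Rightarrow> real" where
  "R1 LU lam AA At d = sqrt (24 * ((1 + alph LU lam)\<^sup>2 + (alph LU lam)\<^sup>2)
      / (5 * gam lam * min 3 (lam / 3)) * Bc lam AA At d)"

definition rf :: "real \<Rightarrow> 'a::euclidean_space \<Rightarrow> 'a \<Rightarrow> 'a \<Rightarrow> 'a \<Rightarrow> real" where
  "rf a x xt v vt = a * norm (x - xt) + norm (x - xt + v - vt)"

end

theory Submission
  imports Defs
begin

text \<open>With \<open>w = x + v\<close> the quadratic part of \<open>H\<close> becomes \<open>c |x|\<^sup>2 - 12 x\<bullet>w + 12 |w|\<^sup>2\<close>, and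
  \<open>12 x\<bullet>w \<le> 4 |x|\<^sup>2 + 9 |w|\<^sup>2\<close> shows that \<open>H\<close> controls \<open>|x|\<^sup>2 + |x + v|\<^sup>2\<close>. The distance \<open>r\<close> is
  bounded by the norms of \<open>x, x + v, x', x' + v'\<close>, so \<open>r\<^sup>2\<close> is bounded by a multiple of
  \<open>H(x, v) + H(x', v')\<close>; the threshold \<open>R\<^sub>1\<close> is chosen so that this bound turns \<open>r \<ge> R\<^sub>1\<close>
  into \<open>\<gamma> (H(x, v) + H(x', v')) \<ge> 12 B / 5\<close>.\<close>

lemma quadratic_form_lower_bound:
  fixes x v :: "'a::real_inner" and c m :: real
  assumes "m \<le> 3" and "m + 4 \<le> c"
  shows "m * ((norm x)\<^sup>2 + (norm (x + v))\<^sup>2) \<le> c * (norm x)\<^sup>2 + 12 * (x \<bullet> v) + 12 * (norm v)\<^sup>2"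
proof -
  define w where "w = x + v"
  have "x \<bullet> w \<le> norm x * norm w"
    by (rule norm_cauchy_schwarz)
  moreover have "0 \<le> (2 * norm x - 3 * norm w)\<^sup>2"
    by simp
  ultimately have young: "12 * (x \<bullet> w) \<le> 4 * (norm x)\<^sup>2 + 9 * (norm w)\<^sup>2"
    by (simp add: power2_eq_square algebra_simps)
  have "c * (norm x)\<^sup>2 + 12 * (x \<bullet> v) + 12 * (norm v)\<^sup>2
      = c * (norm x)\<^sup>2 - 12 * (x \<bullet> w) + 12 * (norm w)\<^sup>2"
    by (simp add: w_def power2_norm_eq_inner inner_add_left inner_add_right inner_commute
        algebra_simps)
  moreover have "0 \<le> (c - 4 - m) * (norm x)\<^sup>2" and "0 \<le> (3 - m) * (norm w)\<^sup>2"
    using assms by simp_all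
  ultimately show ?thesis
    using young by (simp add: w_def algebra_simps)
qed

lemma min_add_four_le_Hf_coefficient:
  assumes "0 < lam"
  shows "min (lam / 3) 3 + 4 \<le> 6 * (1 - gam lam) + lam"
proof -
  have "9 * lam \<le> (6 + 2 * lam) * (lam + 1)"
    using zero_le_square[of "lam - 1/4"] by (simp add: power2_eq_square algebra_simps)
  then have "6 * gam lam \<le> 2 + 2 * lam / 3"
    using assms by (simp add: gam_def field_simps)
  then show ?thesis
    by (simp add: min_def)
qed

lemma Hf_lower_bound:
  fixes U :: "'a::euclidean_space \<Rightarrow> real" and x v :: 'a
  assumes "0 \<le> U x" and "0 < lam"
  shows "min (lam / 3) 3 * ((norm x)\<^sup>2 + (norm (x + v))\<^sup>2) \<le> Hf U lam x v"
proof -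
  have "min (lam / 3) 3 * ((norm x)\<^sup>2 + (norm (x + v))\<^sup>2)
      \<le> (6 * (1 - gam lam) + lam) * (norm x)\<^sup>2 + 12 * (x \<bullet> v) + 12 * (norm v)\<^sup>2"
    using min_add_four_le_Hf_coefficient[OF \<open>0 < lam\<close>]
    by (intro quadratic_form_lower_bound) simp_all
  then show ?thesis
    using \<open>0 \<le> U x\<close> by (simp add: Hf_def)
qed

lemma square_sum_le_twice_sum_squares:
  fixes s t :: real
  shows "(s + t)\<^sup>2 \<le> 2 * (s\<^sup>2 + t\<^sup>2)"
  using zero_le_square[of "s - t"] by (simp add: power2_eq_square algebra_simps)

lemma rf_square_le:
  fixes x xt v vt :: "'a::euclidean_space" and a :: real
  assumes "0 \<le> a"
  shows "(rf a x xt v vt)\<^sup>2 \<le> 2 * ((1 + a)\<^sup>2 + a\<^sup>2)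
      * ((norm x)\<^sup>2 + (norm (x + v))\<^sup>2 + ((norm xt)\<^sup>2 + (norm (xt + vt))\<^sup>2))"
proof -
  define p where "p = norm x + norm xt"
  define q where "q = norm (x + v) + norm (xt + vt)"
  have diff: "x - xt + v - vt = (x + v) - (xt + vt)"
    by (simp add: algebra_simps)
  have "rf a x xt v vt \<le> a * p + q"
    unfolding rf_def diff p_def q_def
    using mult_left_mono[OF norm_triangle_ineq4[of x xt] assms]
      norm_triangle_ineq4[of "x + v" "xt + vt"]
    by linarith
  moreover have "0 \<le> rf a x xt v vt"
    using assms by (simp add: rf_def)
  ultimately have "(rf a x xt v vt)\<^sup>2 \<le> (a * p + q)\<^sup>2"
    by (simp add: power_mono)
  also have "\<dots> \<le> (a\<^sup>2 + 1) * (p\<^sup>2 + q\<^sup>2)"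
    using zero_le_square[of "a * q - p"] by (simp add: power2_eq_square algebra_simps)
  also have "\<dots> \<le> ((1 + a)\<^sup>2 + a\<^sup>2)
      * (2 * ((norm x)\<^sup>2 + (norm xt)\<^sup>2) + 2 * ((norm (x + v))\<^sup>2 + (norm (xt + vt))\<^sup>2))"
  proof (rule mult_mono)
    show "a\<^sup>2 + 1 \<le> (1 + a)\<^sup>2 + a\<^sup>2"
      using assms by (simp add: power2_eq_square algebra_simps)
    show "p\<^sup>2 + q\<^sup>2
        \<le> 2 * ((norm x)\<^sup>2 + (norm xt)\<^sup>2) + 2 * ((norm (x + v))\<^sup>2 + (norm (xt + vt))\<^sup>2)"
      unfolding p_def q_def by (intro add_mono square_sum_le_twice_sum_squares)
  qed simp_all
  finally show ?thesis
    by (simp add: algebra_simps)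
qed

lemma rf_square_le_Hf_sum:
  assumes "0 \<le> U x" and "0 \<le> U xt" and "0 < lam" and "0 \<le> a"
  shows "(rf a x xt v vt)\<^sup>2
      \<le> 2 * (((1 + a)\<^sup>2 + a\<^sup>2) / min (lam / 3) 3) * (Hf U lam x v + Hf U lam xt vt)"
proof -
  define m where "m = min (lam / 3) 3"
  define K where "K = (1 + a)\<^sup>2 + a\<^sup>2"
  have "0 < m" and "0 \<le> K"
    using \<open>0 < lam\<close> by (simp_all add: m_def K_def)
  have "(rf a x xt v vt)\<^sup>2
      \<le> 2 * (K / m) * (m * ((norm x)\<^sup>2 + (norm (x + v))\<^sup>2 + ((norm xt)\<^sup>2 + (norm (xt + vt))\<^sup>2)))"
    using rf_square_le[OF \<open>0 \<le> a\<close>, of x xt v vt] \<open>0 < m\<close> by (simp add: K_def)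
  also have "\<dots> \<le> 2 * (K / m) * (Hf U lam x v + Hf U lam xt vt)"
    using Hf_lower_bound[of U x lam v] Hf_lower_bound[of U xt lam vt] assms
      \<open>0 < m\<close> \<open>0 \<le> K\<close>
    by (intro mult_left_mono) (simp_all add: m_def distrib_left)
  finally show ?thesis
    by (simp add: m_def K_def)
qed

lemma R1_le_imp_Bc_le:
  fixes r H :: real
  assumes "0 < lam"
    and "r\<^sup>2 \<le> 2 * (((1 + alph LU lam)\<^sup>2 + (alph LU lam)\<^sup>2) / min (lam / 3) 3) * H"
    and "R1 LU lam AA At d \<le> r"
  shows "12 / 5 * Bc lam AA At d \<le> gam lam * H"
proof -
  define m where "m = min (lam / 3) 3"
  define K where "K = (1 + alph LU lam)\<^sup>2 + (alph LU lam)\<^sup>2"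
  have "0 < m" and "0 < gam lam"
    using \<open>0 < lam\<close> by (simp_all add: m_def gam_def)
  have "0 < K"
    unfolding K_def by (cases "alph LU lam = 0") (simp_all add: add_nonneg_pos)
  have "24 * K / (5 * gam lam * m) * Bc lam AA At d \<le> r\<^sup>2"
    using sqrt_le_D \<open>R1 LU lam AA At d \<le> r\<close> by (simp add: R1_def K_def m_def min.commute)
  also have "\<dots> \<le> 2 * (K / m) * H"
    using assms(2) by (simp add: K_def m_def)
  finally have "K * (24 * Bc lam AA At d) \<le> K * (10 * gam lam * H)"
    using \<open>0 < m\<close> \<open>0 < gam lam\<close> by (simp add: field_simps)
  then show ?thesis
    using \<open>0 < K\<close> by (simp add: algebra_simps)
qed

theorem lemma2p3:
  fixes U W :: "'a::euclidean_space \<Rightarrow> real"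
    and gradU gradW :: "'a \<Rightarrow> 'a"
    and lam AA LU LW At :: real
  assumes U_deriv: "\<And>x. (U has_derivative (\<lambda>h. gradU x \<bullet> h)) (at x)"
    and U_C1: "continuous_on UNIV gradU"
    and W_deriv: "\<And>x. (W has_derivative (\<lambda>h. gradW x \<bullet> h)) (at x)"
    and W_C1: "continuous_on UNIV gradW"
    and A1_nonneg: "\<And>x. U x \<ge> 0"
    and lam_pos: "lam > 0" and AA_nonneg: "AA \<ge> 0"
    and A1: "\<And>x. (1/2) * (gradU x \<bullet> x) \<ge> lam * (U x + (norm x)\<^sup>2 / 4) - AA"
    and A2: "LU-lipschitz_on UNIV gradU" and LU_pos: "LU > 0"
    and A3_even: "\<And>x. W (- x) = W x"
    and A3_lip: "LW-lipschitz_on UNIV gradW" and LW_small: "LW < lam / 8"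
    and At_nonneg: "At \<ge> 0"
    and At_bound: "\<And>x. U x \<ge> lam / 6 * (norm x)\<^sup>2 - At"
  shows "\<forall>x xt v vt :: 'a.
      (rf (alph LU lam) x xt v vt)\<^sup>2
        \<le> 2 * (((1 + alph LU lam)\<^sup>2 + (alph LU lam)\<^sup>2) / min (lam / 3) 3)
            * (Hf U lam x v + Hf U lam xt vt)
      \<and> (rf (alph LU lam) x xt v vt \<ge> R1 LU lam AA At DIM('a) \<longrightarrow>
           gam lam * Hf U lam x v + gam lam * Hf U lam xt vt \<ge> 12 / 5 * Bc lam AA At DIM('a))"
proof (intro allI)
  fix x xt v vt :: 'a
  have "0 \<le> alph LU lam"
    using LU_pos lam_pos by (simp add: alph_def)
  then have bound: "(rf (alph LU lam) x xt v vt)\<^sup>2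
      \<le> 2 * (((1 + alph LU lam)\<^sup>2 + (alph LU lam)\<^sup>2) / min (lam / 3) 3)
        * (Hf U lam x v + Hf U lam xt vt)"
    using A1_nonneg lam_pos by (intro rf_square_le_Hf_sum)
  then show "?this \<and> (rf (alph LU lam) x xt v vt \<ge> R1 LU lam AA At DIM('a) \<longrightarrow>
      gam lam * Hf U lam x v + gam lam * Hf U lam xt vt \<ge> 12 / 5 * Bc lam AA At DIM('a))"
    using R1_le_imp_Bc_le[OF lam_pos bound] by (simp add: distrib_left)
qed

end
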